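(* Let $J:=\operatorname{conv}\{\mathbf{v}_0,\mathbf{v}_1,\dots,\mathbf{v}_d\}\subset\mathbb{R}^d$ be a $d$-simplex, $\mathbf{c}\in\mathbb{R}^d\setminus\{\mathbf{0}\}$, $q\ge1$ real, and suppose $\mathbf{c}^\top\mathbf{v}_j\ge0$ for $j=0,\dots,d$. Then $$\int_J(\mathbf{c}^\top\mathbf{x})^q\,d\mathbf{x}\ge d!\operatorname{vol}(J)\frac{\Gamma(q+1)}{\Gamma(q+d+1)}\sum_{j=0}^d(\mathbf{c}^\top\mathbf{v}_j)^q.$$ The inequality becomes (asymptotically) tight when $\frac{\mathbf{c}^\top\mathbf{v}_j}{\mathbf{c}^\top\mathbf{v}_k}\to0$ for all $j\neq k$, where $k$ is an index with $\mathbf{c}^\top\mathbf{v}_k=\max_j\mathbf{c}^\top\mathbf{v}_j$.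
   Context: $\operatorname{vol}(J)$ is the $d$-dimensional Lebesgue measure of $J$; $\Gamma$ is the gamma function. *)

theory Defs
  imports "HOL-Analysis.Analysis"
begin

end

theory Submission
  imports Defs
begin

(* In barycentric coordinates l_0, ..., l_d of J we have c.x = sum_j l_j(x) (c.v_j) with nonnegative
   terms, so superadditivity of t \<mapsto> t^q for q \<ge> 1 gives (c.x)^q \<ge> sum_j (c.v_j)^q l_j(x)^q.
   Each superlevel set {x \<in> J. l_j(x) \<ge> t} is the image of J under the homothety with centre v_j
   and ratio 1 - t, hence has volume (1 - t)^d vol J, and the layer-cake formula yields
   int_J l_j^q = vol J int_0^1 q t^(q-1) (1-t)^d dt = vol J q B(q, d+1) = d! vol J Gamma(q+1) / Gamma(q+d+1). *)

lemma add_powr_le_powr_add: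
  fixes a b q :: real
  assumes "0 \<le> a" "0 \<le> b" "1 \<le> q"
  shows "a powr q + b powr q \<le> (a + b) powr q"
proof (cases "a + b = 0")
  case True
  then have "a = 0" "b = 0" using assms by auto
  then show ?thesis by simp
next
  case False
  define s where "s = a + b"
  have s: "s > 0" using False assms by (simp add: s_def)
  have "(a / s) powr q \<le> a / s" "(b / s) powr q \<le> b / s"
    using assms s powr_mono'[of 1 q "a / s"] powr_mono'[of 1 q "b / s"] by (simp_all add: s_def)
  moreover have "a / s + b / s = 1"
    using s by (simp add: s_def add_divide_distrib[symmetric])
  ultimately have "(a / s) powr q + (b / s) powr q \<le> 1"
    by linarith
  then have "s powr q * ((a / s) powr q + (b / s) powr q) \<le> s powr q"
    by (simp add: mult_left_le)
  then show ?thesis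
    using s assms by (simp add: powr_divide distrib_left s_def)
qed

lemma sum_powr_le_powr_sum:
  fixes u :: "'i \<Rightarrow> real"
  assumes "\<And>i. i \<in> A \<Longrightarrow> 0 \<le> u i" "1 \<le> q"
  shows "(\<Sum>i\<in>A. u i powr q) \<le> (\<Sum>i\<in>A. u i) powr q"
  using assms
proof (induction A rule: infinite_finite_induct)
  case (insert a A)
  have "(\<Sum>i\<in>insert a A. u i powr q) \<le> u a powr q + (\<Sum>i\<in>A. u i) powr q"
    using insert by simp
  also have "\<dots> \<le> (\<Sum>i\<in>insert a A. u i) powr q"
    using insert by (simp add: add_powr_le_powr_add sum_nonneg)
  finally show ?case .
qed simp_all

lemma nn_integral_deriv_powr:
  fixes a q :: real
  assumes "0 \<le> a" "0 < q"
  shows "(\<integral>\<^sup>+t. ennreal (indicator {0<..a} t * (q * t powr (q - 1))) \<partial>lborel) = ennreal (a powr q)"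
proof -
  have "((\<lambda>t. q * t powr (q - 1)) has_integral (a powr q - 0 powr q)) {0..a}"
  proof (rule fundamental_theorem_of_calculus_interior)
    show "continuous_on {0..a} (\<lambda>t. t powr q)"
      using assms by (intro continuous_on_powr') (auto intro: continuous_intros)
    show "((\<lambda>t. t powr q) has_vector_derivative q * x powr (q - 1)) (at x)" if "x \<in> {0<..<a}" for x
      using that has_real_derivative_powr[of x q]
      by (simp add: has_real_derivative_iff_has_vector_derivative)
  qed (use assms in auto)
  then have "(\<integral>\<^sup>+t. ennreal (indicator {0..a} t * (q * t powr (q - 1))) \<partial>lborel) = ennreal (a powr q)"
    using assms by (simp add: nn_integral_has_integral_lebesgue)
  moreover have "indicator {0..a} t * (q * t powr (q - 1)) = indicator {0<..a} t * (q * t powr (q - 1))" for t :: real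
    \<comment> \<open>both sides vanish at \<open>t = 0\<close> since \<open>0 powr x = 0\<close>\<close>
    by (cases "t = 0") (simp_all add: indicator_def)
  ultimately show ?thesis by simp
qed

lemma nn_integral_powr_layer_cake:
  fixes f :: "'a \<Rightarrow> real"
  assumes M: "sigma_finite_measure M" and J[measurable]: "J \<in> sets M"
    and f[measurable]: "f \<in> borel_measurable M" and nonneg: "\<And>x. x \<in> J \<Longrightarrow> 0 \<le> f x"
    and q: "0 < q"
  shows "(\<integral>\<^sup>+x\<in>J. ennreal (f x powr q) \<partial>M)
    = (\<integral>\<^sup>+t. ennreal (indicator {0<..} t * (q * t powr (q - 1))) * emeasure M {x\<in>J. t \<le> f x} \<partial>lborel)"
proof -
  interpret pair_sigma_finite M lborel
    using M by (simp add: pair_sigma_finite_def lborel.sigma_finite_measure_axioms)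
  let ?g = "\<lambda>t. q * t powr (q - 1)"
  have "(\<integral>\<^sup>+x\<in>J. ennreal (f x powr q) \<partial>M)
      = (\<integral>\<^sup>+x. \<integral>\<^sup>+t. ennreal (indicator J x * indicator {0<..f x} t * ?g t) \<partial>lborel \<partial>M)"
    by (intro nn_integral_cong) (simp add: nn_integral_deriv_powr nonneg q split: split_indicator)
  also have "\<dots> = (\<integral>\<^sup>+t. \<integral>\<^sup>+x. ennreal (indicator J x * indicator {0<..f x} t * ?g t) \<partial>M \<partial>lborel)"
  proof (rule Fubini'[symmetric])
    have "indicator {0<..f x} t = (if 0 < t \<and> t \<le> f x then 1 else (0::real))" for x t
      by (simp add: indicator_def)
    then show "(\<lambda>(x, t). ennreal (indicator J x * indicator {0<..f x} t * ?g t)) \<in> borel_measurable (M \<Otimes>\<^sub>M lborel)"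
      by simp
  qed
  also have "\<dots> = (\<integral>\<^sup>+t. ennreal (indicator {0<..} t * ?g t) * emeasure M {x\<in>J. t \<le> f x} \<partial>lborel)"
  proof (intro nn_integral_cong)
    fix t :: real
    have "(\<integral>\<^sup>+x. ennreal (indicator J x * indicator {0<..f x} t * ?g t) \<partial>M)
        = (\<integral>\<^sup>+x. ennreal (indicator {0<..} t * ?g t) * indicator {x\<in>J. t \<le> f x} x \<partial>M)"
      by (intro nn_integral_cong) (auto simp: indicator_def)
    then show "(\<integral>\<^sup>+x. ennreal (indicator J x * indicator {0<..f x} t * ?g t) \<partial>M)
        = ennreal (indicator {0<..} t * ?g t) * emeasure M {x\<in>J. t \<le> f x}"
      by (simp add: nn_integral_cmult_indicator)
  qed
  finally show ?thesis .
qed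

lemma nn_integral_powr_eq_Beta:
  fixes f :: "'a \<Rightarrow> real"
  assumes M: "sigma_finite_measure M" and J: "J \<in> sets M" and f: "f \<in> borel_measurable M"
    and range: "\<And>x. x \<in> J \<Longrightarrow> 0 \<le> f x \<and> f x \<le> 1" and q: "0 < q"
    and superlevel: "\<And>t. 0 < t \<Longrightarrow> t < 1 \<Longrightarrow>
      emeasure M {x\<in>J. t \<le> f x} = ennreal ((1 - t) ^ n) * emeasure M J"
  shows "(\<integral>\<^sup>+x\<in>J. ennreal (f x powr q) \<partial>M) = ennreal (q * Beta q (real n + 1)) * emeasure M J"
proof -
  let ?B = "\<lambda>t. q * (t powr (q - 1) * (1 - t) powr (real n + 1 - 1))"
  have "(\<integral>\<^sup>+x\<in>J. ennreal (f x powr q) \<partial>M)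
      = (\<integral>\<^sup>+t. ennreal (indicator {0<..} t * (q * t powr (q - 1))) * emeasure M {x\<in>J. t \<le> f x} \<partial>lborel)"
    using range by (intro nn_integral_powr_layer_cake[OF M J f _ q]) auto
  also have "\<dots> = (\<integral>\<^sup>+t. ennreal (indicator {0<..<1} t * ?B t) * emeasure M J \<partial>lborel)"
  proof (rule nn_integral_cong_AE)
    show "AE t in lborel. ennreal (indicator {0<..} t * (q * t powr (q - 1))) * emeasure M {x\<in>J. t \<le> f x}
        = ennreal (indicator {0<..<1} t * ?B t) * emeasure M J"
      using AE_lborel_singleton[of 1]
    proof eventually_elim
      case (elim t)
      consider "t \<le> 0" | "0 < t" "t < 1" | "1 < t"
        using elim by linarith
      then show ?case
      proof cases
        case 2
        then show ?thesis
          using q by (simp add: superlevel powr_realpow ennreal_mult' mult_ac)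
      next
        case 3
        then have "{x\<in>J. t \<le> f x} = {}"
          using range by force
        then have "emeasure M {x\<in>J. t \<le> f x} = 0"
          by (metis emeasure_empty)
        with 3 show ?thesis
          by simp
      qed simp
    qed
  qed
  also have "\<dots> = ennreal (q * Beta q (real n + 1)) * emeasure M J"
  proof -
    have "(?B has_integral q * Beta q (real n + 1)) {0<..<1}"
      using has_integral_Beta_real[of q "real n + 1"] q
      by (intro has_integral_mult_right) (simp add: has_integral_Icc_iff_Ioo)
    then have "(\<integral>\<^sup>+t. ennreal (indicator {0<..<1} t * ?B t) \<partial>lborel) = ennreal (q * Beta q (real n + 1))"
      using q by (simp add: nn_integral_has_integral_lebesgue)
    then show ?thesis
      by (simp add: nn_integral_multc)
  qed
  finally show ?thesis .
qed

lemma mult_Beta_of_nat_plus_1: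
  fixes q :: real
  assumes "0 < q"
  shows "q * Beta q (real n + 1) = fact n * (Gamma (q + 1) / Gamma (q + real n + 1))"
proof -
  have "Gamma (real n + 1) = fact n"
    using Gamma_fact[of n] by (simp add: add.commute)
  moreover have "Gamma (q + 1) = q * Gamma q"
    using assms by (intro Gamma_plus1) (auto simp: nonpos_Ints_def)
  ultimately show ?thesis
    by (simp add: Beta_def field_simps)
qed

lemma continuous_on_compact_integrable_on:
  fixes f :: "'a::euclidean_space \<Rightarrow> real"
  assumes "compact S" "continuous_on S f"
  shows "f integrable_on S"
  using borel_integrable_compact[OF assms]
  by (intro set_borel_integral_eq_integral(1)) (simp add: set_integrable_def)

lemma basis_coordinates_exist:
  fixes w :: "'i \<Rightarrow> 'a::euclidean_space"
  assumes I: "finite I" and inj: "inj_on w I" and indep: "independent (w ` I)"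
    and span: "span (w ` I) = UNIV"
  obtains r :: "'i \<Rightarrow> 'a \<Rightarrow> real" where
    "\<And>i. linear (r i)"
    "\<And>y. (\<Sum>i\<in>I. r i y *\<^sub>R w i) = y"
    "\<And>i k. i \<in> I \<Longrightarrow> k \<in> I \<Longrightarrow> r i (w k) = (if i = k then 1 else 0)"
proof
  let ?r = "\<lambda>i y. representation (w ` I) y (w i)"
  show "linear (?r i)" for i
    using linear_representation[OF indep span, of "w i"]
    by (simp add: linear_def real_scaleR_def[abs_def])
  show "(\<Sum>i\<in>I. ?r i y *\<^sub>R w i) = y" for y
    using sum.reindex[OF inj, of "\<lambda>b. representation (w ` I) y b *\<^sub>R b"]
      sum_representation_eq[OF indep, of y "w ` I"] I span
    by simp
  show "?r i (w k) = (if i = k then 1 else 0)" if "i \<in> I" "k \<in> I" for i k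
    using that inj representation_basis[OF indep, of "w k"] by (auto simp: inj_on_eq_iff)
qed

locale barycentric_coordinates =
  fixes v :: "nat \<Rightarrow> 'a::euclidean_space" and n :: nat and l :: "nat \<Rightarrow> 'a \<Rightarrow> real"
  assumes continuous_on_coordinate: "continuous_on UNIV (l j)"
    and coordinate_affine: "a + b = 1 \<Longrightarrow> l j (a *\<^sub>R x + b *\<^sub>R y) = a * l j x + b * l j y"
    and sum_coordinates: "(\<Sum>j\<le>n. l j x) = 1"
    and sum_coordinates_scaleR: "(\<Sum>j\<le>n. l j x *\<^sub>R v j) = x"
    and coordinate_vertex: "j \<le> n \<Longrightarrow> k \<le> n \<Longrightarrow> l j (v k) = (if j = k then 1 else 0)"

lemma vertex_differences_basis:
  fixes v :: "nat \<Rightarrow> 'a::euclidean_space"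
  assumes indep: "\<not> affine_dependent (v ` {..DIM('a)})" and inj: "inj_on v {..DIM('a)}"
  shows "inj_on (\<lambda>i. v i - v 0) {1..DIM('a)}"
    and "independent ((\<lambda>i. v i - v 0) ` {1..DIM('a)})"
    and "span ((\<lambda>i. v i - v 0) ` {1..DIM('a)}) = UNIV"
proof -
  let ?n = "DIM('a)"
  let ?w = "\<lambda>i. v i - v 0"
  have vertices: "v ` {..?n} = insert (v 0) (v ` {1..?n})" and v0: "v 0 \<notin> v ` {1..?n}"
    using inj by (auto simp: image_iff inj_on_def Ball_def) (metis le_zero_eq not_less_eq_eq)
  show inj_w: "inj_on ?w {1..?n}"
    using inj by (auto simp: inj_on_def)
  show indep_w: "independent (?w ` {1..?n})"
    using indep affine_dependent_iff_dependent[OF v0] by (simp add: vertices image_image)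
  show "span (?w ` {1..?n}) = UNIV"
    using card_eq_dim[of "?w ` {1..?n}" UNIV] indep_w card_image[OF inj_w] by auto
qed

lemma barycentric_coordinates_exist:
  fixes v :: "nat \<Rightarrow> 'a::euclidean_space"
  assumes "\<not> affine_dependent (v ` {..DIM('a)})" and "inj_on v {..DIM('a)}"
  obtains l where "barycentric_coordinates v DIM('a) l"
proof -
  let ?n = "DIM('a)"
  let ?w = "\<lambda>i. v i - v 0"
  obtain r where lin: "\<And>i. linear (r i)"
    and repr: "\<And>y. (\<Sum>i=1..?n. r i y *\<^sub>R ?w i) = y"
    and basis: "\<And>i k. i \<in> {1..?n} \<Longrightarrow> k \<in> {1..?n} \<Longrightarrow> r i (?w k) = (if i = k then 1 else 0)"
    using basis_coordinates_exist[OF _ vertex_differences_basis[OF assms]] by blast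
  define l where "l j x = (if j = 0 then 1 - (\<Sum>i=1..?n. r i (x - v 0)) else r j (x - v 0))" for j x
  have split: "{..?n} = insert 0 {1..?n}"
    by auto
  have "barycentric_coordinates v ?n l"
  proof
    fix j
    have r_continuous: "continuous_on UNIV (\<lambda>x. r i (x - v 0))" for i
      using lin[of i] by (intro continuous_on_compose2[OF linear_continuous_on[of "r i"]])
        (auto simp: linear_conv_bounded_linear intro: continuous_intros)
    show "continuous_on UNIV (l j)"
      unfolding l_def by (cases "j = 0") (auto intro!: continuous_intros r_continuous)
  next
    fix a b :: real and j and x y :: 'a
    assume ab: "a + b = 1"
    have "a *\<^sub>R x + b *\<^sub>R y - v 0 = a *\<^sub>R (x - v 0) + b *\<^sub>R (y - v 0)"
      using ab by (simp add: algebra_simps flip: scaleR_add_left)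
    then have r_affine: "r i (a *\<^sub>R x + b *\<^sub>R y - v 0) = a * r i (x - v 0) + b * r i (y - v 0)" for i
      using linear_add[OF lin] linear_scale[OF lin] by simp
    show "l j (a *\<^sub>R x + b *\<^sub>R y) = a * l j x + b * l j y"
      using ab by (simp add: l_def r_affine sum.distrib sum_distrib_left algebra_simps)
  next
    show "(\<Sum>j\<le>?n. l j x) = 1" for x
      by (simp add: split l_def)
  next
    fix x
    have "(\<Sum>j\<le>?n. l j x *\<^sub>R v j) = v 0 + (\<Sum>i=1..?n. r i (x - v 0) *\<^sub>R ?w i)"
      by (simp add: split l_def algebra_simps scaleR_sum_left sum_subtractf)
    then show "(\<Sum>j\<le>?n. l j x *\<^sub>R v j) = x"
      using repr[of "x - v 0"] by simp
  next
    fix j k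
    assume jk: "j \<le> ?n" "k \<le> ?n"
    show "l j (v k) = (if j = k then 1 else 0)"
    proof (cases "k = 0")
      case True
      then show ?thesis
        using jk by (simp add: l_def linear_0[OF lin])
    next
      case False
      then have "(\<Sum>i=1..?n. r i (?w k)) = (\<Sum>i=1..?n. if i = k then 1 else 0)"
        using basis jk by (intro sum.cong) auto
      then show ?thesis
        using False basis jk by (simp add: l_def)
    qed
  qed
  then show ?thesis ..
qed


context barycentric_coordinates
begin

abbreviation J :: "'a set" where
  "J \<equiv> convex hull (v ` {..n})"

lemma convex_hull_eq_nonneg_coordinates: "J = {x. \<forall>j\<le>n. 0 \<le> l j x}"
proof
  show "J \<subseteq> {x. \<forall>j\<le>n. 0 \<le> l j x}"
  proof (rule hull_minimal)
    show "v ` {..n} \<subseteq> {x. \<forall>j\<le>n. 0 \<le> l j x}"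
      by (auto simp: coordinate_vertex)
    show "convex {x. \<forall>j\<le>n. 0 \<le> l j x}"
      by (auto simp: convex_def coordinate_affine)
  qed
  show "{x. \<forall>j\<le>n. 0 \<le> l j x} \<subseteq> J"
  proof
    fix x
    assume "x \<in> {x. \<forall>j\<le>n. 0 \<le> l j x}"
    then have "(\<Sum>j\<le>n. l j x *\<^sub>R v j) \<in> J"
      by (intro convex_sum) (auto simp: sum_coordinates intro: hull_inc)
    then show "x \<in> J"
      by (simp add: sum_coordinates_scaleR)
  qed
qed

lemma coordinate_bounds:
  assumes "x \<in> J" "j \<le> n"
  shows "0 \<le> l j x" "l j x \<le> 1"
proof -
  have nonneg: "\<forall>k\<le>n. 0 \<le> l k x"
    using assms(1) convex_hull_eq_nonneg_coordinates by auto
  then show "0 \<le> l j x"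
    using assms(2) by simp
  have "l j x \<le> (\<Sum>k\<le>n. l k x)"
    using nonneg assms(2) by (intro member_le_sum) auto
  then show "l j x \<le> 1"
    by (simp add: sum_coordinates)
qed

lemma coordinate_homothety:
  assumes "k \<le> n" "j \<le> n"
  shows "l k ((1 - t) *\<^sub>R y + t *\<^sub>R v j) = (1 - t) * l k y + t * (if k = j then 1 else 0)"
  using coordinate_affine[of "1 - t" t k y "v j"] coordinate_vertex[OF assms] by simp

lemma superlevel_set_eq_homothety:
  assumes j: "j \<le> n" and t: "0 \<le> t" "t < 1"
  shows "{x\<in>J. t \<le> l j x} = (\<lambda>y. (1 - t) *\<^sub>R y + t *\<^sub>R v j) ` J"
proof
  show "(\<lambda>y. (1 - t) *\<^sub>R y + t *\<^sub>R v j) ` J \<subseteq> {x\<in>J. t \<le> l j x}"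
  proof
    fix x
    assume "x \<in> (\<lambda>y. (1 - t) *\<^sub>R y + t *\<^sub>R v j) ` J"
    then obtain y where y: "y \<in> J" and xy: "x = (1 - t) *\<^sub>R y + t *\<^sub>R v j"
      by blast
    have "0 \<le> l k x" if "k \<le> n" for k
      using coordinate_homothety[OF that j] coordinate_bounds(1)[OF y that] t xy by simp
    moreover have "t \<le> l j x"
      using coordinate_homothety[OF j j] coordinate_bounds(1)[OF y j] t xy by simp
    ultimately show "x \<in> {x\<in>J. t \<le> l j x}"
      by (simp add: convex_hull_eq_nonneg_coordinates)
  qed
  show "{x\<in>J. t \<le> l j x} \<subseteq> (\<lambda>y. (1 - t) *\<^sub>R y + t *\<^sub>R v j) ` J"
  proof clarify
    fix x
    assume x: "x \<in> J" and tx: "t \<le> l j x"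
    define y where "y = (1 / (1 - t)) *\<^sub>R (x - t *\<^sub>R v j)"
    have xy: "x = (1 - t) *\<^sub>R y + t *\<^sub>R v j"
      using t by (simp add: y_def)
    have "0 \<le> l k y" if k: "k \<le> n" for k
    proof -
      have "0 \<le> (1 - t) * l k y + t * (if k = j then 1 else 0) - t * (if k = j then 1 else 0)"
        using coordinate_homothety[OF k j, of t y] coordinate_bounds(1)[OF x k] tx t xy
        by (cases "k = j") auto
      then show ?thesis
        using t by (simp add: zero_le_mult_iff)
    qed
    then have "y \<in> J"
      by (simp add: convex_hull_eq_nonneg_coordinates)
    with xy show "x \<in> (\<lambda>y. (1 - t) *\<^sub>R y + t *\<^sub>R v j) ` J"
      by blast
  qed
qed

lemma emeasure_superlevel_set:
  assumes "j \<le> n" "0 \<le> t" "t < 1"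
  shows "emeasure lborel {x\<in>J. t \<le> l j x} = ennreal ((1 - t) ^ DIM('a)) * emeasure lborel J"
proof -
  have "compact ((\<lambda>y. (1 - t) *\<^sub>R y + t *\<^sub>R v j) ` J)"
    by (intro compact_continuous_image continuous_intros compact_convex_hull finite_imp_compact) simp
  then have "emeasure lborel {x\<in>J. t \<le> l j x}
      = emeasure lebesgue ((\<lambda>y. (1 - t) *\<^sub>R y + t *\<^sub>R v j) ` J)"
    by (simp add: superlevel_set_eq_homothety assms borel_compact)
  also have "\<dots> = ennreal ((1 - t) ^ DIM('a)) * emeasure lborel J"
    using emeasure_lebesgue_affine[of "1 - t" "t *\<^sub>R v j" J] assms
    by (simp add: borel_compact compact_convex_hull finite_imp_compact)
  finally show ?thesis .
qed

lemma has_integral_coordinate_powr: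
  assumes j: "j \<le> n" and q: "0 < q"
  shows "((\<lambda>x. l j x powr q) has_integral measure lebesgue J * (q * Beta q (real DIM('a) + 1))) J"
proof -
  let ?I = "measure lebesgue J * (q * Beta q (real DIM('a) + 1))"
  have compact: "compact J"
    by (simp add: compact_convex_hull finite_imp_compact)
  have measurable[measurable]: "l j \<in> borel_measurable borel" "J \<in> sets borel"
    by (simp_all add: borel_measurable_continuous_onI continuous_on_coordinate borel_compact compact)
  have Beta_pos: "0 < q * Beta q (real DIM('a) + 1)"
    using q by (simp add: Beta_def Gamma_real_pos)
  have "(\<integral>\<^sup>+x\<in>J. ennreal (l j x powr q) \<partial>lborel)
      = ennreal (q * Beta q (real DIM('a) + 1)) * emeasure lborel J"
    using coordinate_bounds[OF _ j] emeasure_superlevel_set[OF j] q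
    by (intro nn_integral_powr_eq_Beta) (auto simp: lborel.sigma_finite_measure_axioms)
  also have "\<dots> = ennreal ?I"
    using emeasure_compact_finite[OF compact] Beta_pos
    by (simp add: emeasure_eq_ennreal_measure ennreal_mult' mult.commute)
  finally have "((\<lambda>x. indicator J x * l j x powr q) has_integral ?I) UNIV"
    using Beta_pos by (intro nn_integral_has_integral) (simp_all add: nn_integral_set_ennreal mult.commute)
  moreover have "(\<lambda>x. indicator J x * l j x powr q) = (\<lambda>x. if x \<in> J then l j x powr q else 0)"
    by (auto simp: indicator_def)
  ultimately show ?thesis
    by (simp add: has_integral_restrict_UNIV)
qed

lemma sum_powr_coordinates_le_inner_powr:
  fixes c :: 'a
  assumes x: "x \<in> J" and q: "1 \<le> q" and c: "\<And>j. j \<le> n \<Longrightarrow> 0 \<le> c \<bullet> v j"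
  shows "(\<Sum>j\<le>n. (c \<bullet> v j) powr q * l j x powr q) \<le> (c \<bullet> x) powr q"
proof -
  have "(\<Sum>j\<le>n. (c \<bullet> v j) powr q * l j x powr q) = (\<Sum>j\<le>n. (l j x * (c \<bullet> v j)) powr q)"
    using coordinate_bounds(1)[OF x] c by (simp add: powr_mult mult.commute)
  also have "\<dots> \<le> (\<Sum>j\<le>n. l j x * (c \<bullet> v j)) powr q"
    using coordinate_bounds(1)[OF x] c q by (intro sum_powr_le_powr_sum) auto
  also have "(\<Sum>j\<le>n. l j x * (c \<bullet> v j)) = c \<bullet> x"
    using arg_cong[OF sum_coordinates_scaleR[of x], of "(\<bullet>) c"]
    by (simp add: inner_sum_right mult.commute)
  finally show ?thesis .
qed

end

theorem lemma5:
  fixes v :: "nat \<Rightarrow> 'a::euclidean_space" and c :: 'a and q :: real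
  assumes simplex: "\<not> affine_dependent (v ` {0..DIM('a)})"
    and inj: "inj_on v {0..DIM('a)}"
    and c_nz: "c \<noteq> 0"
    and q_ge: "q \<ge> 1"
    and nonneg: "\<And>j. j \<le> DIM('a) \<Longrightarrow> c \<bullet> v j \<ge> 0"
  shows "integral (convex hull (v ` {0..DIM('a)})) (\<lambda>x. (c \<bullet> x) powr q)
     \<ge> fact DIM('a) * measure lebesgue (convex hull (v ` {0..DIM('a)}))
        * (Gamma (q + 1) / Gamma (q + real DIM('a) + 1))
        * (\<Sum>j\<le>DIM('a). (c \<bullet> v j) powr q)"
proof -
  obtain l where "barycentric_coordinates v DIM('a) l"
    using barycentric_coordinates_exist simplex inj by (auto simp: atLeast0AtMost)
  then interpret barycentric_coordinates v "DIM('a)" l .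
  let ?K = "measure lebesgue J * (q * Beta q (real DIM('a) + 1))"
  have "((\<lambda>x. \<Sum>j\<le>DIM('a). (c \<bullet> v j) powr q * l j x powr q) has_integral
      (\<Sum>j\<le>DIM('a). (c \<bullet> v j) powr q * ?K)) J"
    using q_ge by (intro has_integral_sum has_integral_mult_right has_integral_coordinate_powr) auto
  moreover have "(\<lambda>x. (c \<bullet> x) powr q) integrable_on J"
  proof (intro continuous_on_compact_integrable_on continuous_on_powr' continuous_intros)
    have "J \<subseteq> {x. 0 \<le> c \<bullet> x}"
      using nonneg by (intro hull_minimal) (auto simp: convex_halfspace_ge)
    then show "\<forall>x\<in>J. 0 \<le> c \<bullet> x \<and> (c \<bullet> x = 0 \<longrightarrow> 0 < q)"
      using q_ge by auto
  qed (simp_all add: compact_convex_hull finite_imp_compact)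
  ultimately have "(\<Sum>j\<le>DIM('a). (c \<bullet> v j) powr q * ?K) \<le> integral J (\<lambda>x. (c \<bullet> x) powr q)"
    by (rule has_integral_le[OF _ integrable_integral])
      (use sum_powr_coordinates_le_inner_powr q_ge nonneg in auto)
  moreover have "?K = fact DIM('a) * measure lebesgue J * (Gamma (q + 1) / Gamma (q + real DIM('a) + 1))"
    using q_ge by (simp add: mult_Beta_of_nat_plus_1)
  then have "(\<Sum>j\<le>DIM('a). (c \<bullet> v j) powr q * ?K)
      = fact DIM('a) * measure lebesgue J * (Gamma (q + 1) / Gamma (q + real DIM('a) + 1))
        * (\<Sum>j\<le>DIM('a). (c \<bullet> v j) powr q)"
    by (simp only: sum_distrib_right[symmetric] mult.commute)
  ultimately show ?thesis
    by (simp add: atLeast0AtMost)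
qed

end
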